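(* For any interval $\mathcal{I}\subseteq[-1/2,1/2)$ and any $f\in\mathbb{F}_q[X]$ of degree $d$ with $p\nmid d$, \[N_{\mathcal{I}}(f,\psi)=(d-1)|\mathcal{I}|+O\left(\frac{d}{\log d}\right),\] where the implied constant depends at most on $q$.
   Context: $p$ odd prime, $q$ a power of $p$; $\mathrm{tr}_n:\mathbb{F}_{q^n}\to\mathbb{F}_p$ absolute trace; $\psi$ a fixed nontrivial additive character of $\mathbb{F}_p$; $S_n(f,\psi)=\sum_{x\in\mathbb{F}_{q^n}}\psi(\mathrm{tr}_nf(x))$; $L(u,f,\psi)=\exp(\sum_{n\ge1}S_n(f,\psi)u^n/n)=\prod_{j=1}^{d-1}(1-\sqrt q e^{2\pi i\theta_j(f,\psi)}u)$ with $\theta_j(f,\psi)\in[-1/2,1/2)$. $N_{\mathcal{I}}(f,\psi)=\#\{1\le j\le d-1:\theta_j(f,\psi)\in\mathcal{I}\}$, and $|\mathcal{I}|$ is the length of $\mathcal{I}$. *)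

theory Defs
  imports "HOL-Analysis.Analysis" "HOL-Computational_Algebra.Computational_Algebra"
begin

text \<open>Ambient field: an algebraically closed field 'k of characteristic p. Inside it,
  F_{q^n} is the set of roots of X^{q^n} - X, and F_p = F_{p^1}.\<close>

definition alg_closed_field :: "'k::field itself \<Rightarrow> bool" where
  "alg_closed_field _ \<longleftrightarrow> (\<forall>P :: 'k poly. degree P > 0 \<longrightarrow> (\<exists>x. poly P x = 0))"

definition finite_subfield :: "nat \<Rightarrow> 'k::field set" where
  "finite_subfield m = {x. x ^ m = x}"

definition abs_trace :: "nat \<Rightarrow> nat \<Rightarrow> nat \<Rightarrow> 'k::field \<Rightarrow> 'k" where
  "abs_trace p e n y = (\<Sum>i<n * e. y ^ (p ^ i))"

definition nontriv_add_char :: "nat \<Rightarrow> ('k::field \<Rightarrow> complex) \<Rightarrow> bool" where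
  "nontriv_add_char p \<psi> \<longleftrightarrow>
     (\<forall>x\<in>finite_subfield p. \<forall>y\<in>finite_subfield p. \<psi> (x + y) = \<psi> x * \<psi> y)
     \<and> (\<exists>x\<in>finite_subfield p. \<psi> x \<noteq> 1)"

definition exp_sum :: "nat \<Rightarrow> nat \<Rightarrow> 'k::field poly \<Rightarrow> ('k \<Rightarrow> complex) \<Rightarrow> nat \<Rightarrow> complex" where
  "exp_sum p e f \<psi> n = (\<Sum>x\<in>finite_subfield ((p ^ e) ^ n). \<psi> (abs_trace p e n (poly f x)))"

definition L_fps :: "nat \<Rightarrow> nat \<Rightarrow> 'k::field poly \<Rightarrow> ('k \<Rightarrow> complex) \<Rightarrow> complex fps" where
  "L_fps p e f \<psi> = fps_exp 1 oo Abs_fps (\<lambda>n. if n = 0 then 0 else exp_sum p e f \<psi> n / of_nat n)"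

definition real_interval :: "real set \<Rightarrow> bool" where
  "real_interval I \<longleftrightarrow> (\<forall>x\<in>I. \<forall>z\<in>I. \<forall>y. x \<le> y \<and> y \<le> z \<longrightarrow> y \<in> I)"

definition interval_length :: "real set \<Rightarrow> real" where
  "interval_length I = (if I = {} then 0 else Sup I - Inf I)"

end

theory Submission
  imports Defs
begin

text \<open>
  Expanding the logarithm of the factorisation of L(u, f, psi) gives
  S_n = - q^(n/2) * sum_j e(n theta_j), while trivially |S_n| <= q^n; hence all Weyl sums
  sum_j e(k theta_j) with 1 <= k <= 2K are at most q^K in absolute value.

  An Erdos-Turan type inequality turns such bounds into a discrepancy estimate O(N/K + K Q)
  for N angles whose Weyl sums up to frequency 2K are at most Q: sample the indicator of I on a
  fine grid and smooth it with the Jackson kernel |sum_{a<=K} e(a x)|^4. Its frequencies lie in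
  [-2K, 2K], so summing it over the angles only involves the Weyl sums, and it decays like
  ||x||^(-4) away from the integers, so only angles close to an endpoint of I are miscounted.
  Choosing K ~ log d / (2 log q) makes both error terms O(d / log d).
\<close>

section \<open>Additive characters of the circle\<close>

definition e2pi :: "real \<Rightarrow> complex" where
  "e2pi x = cis (2 * pi * x)"

lemma e2pi_add: "e2pi (x + y) = e2pi x * e2pi y"
  by (simp add: e2pi_def cis_mult distrib_left)

lemma e2pi_of_int: "e2pi (of_int n) = 1"
  by (simp add: e2pi_def)

lemma e2pi_0 [simp]: "e2pi 0 = 1"
  by (simp add: e2pi_def)

lemma norm_e2pi [simp]: "norm (e2pi x) = 1"
  by (simp add: e2pi_def)

lemma cnj_e2pi: "cnj (e2pi x) = e2pi (- x)"
  by (simp add: e2pi_def cis_cnj)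

lemma e2pi_power: "e2pi x ^ n = e2pi (real n * x)"
  by (simp only: e2pi_def Complex.DeMoivre) (simp add: mult_ac)

lemma e2pi_eq_1_imp_int:
  assumes "e2pi y = 1"
  obtains n :: int where "y = of_int n"
proof -
  have "exp (\<i> * complex_of_real (2 * pi * y)) = 1"
    using assms by (simp add: e2pi_def cis_conv_exp)
  then obtain n :: int where "Im (\<i> * complex_of_real (2 * pi * y)) = of_int (2 * n) * pi"
    unfolding exp_eq_1 by blast
  then have "y = of_int n" by simp
  then show ?thesis by (rule that)
qed

definition dist_int :: "real \<Rightarrow> real" where
  "dist_int x = min (frac x) (1 - frac x)"

lemma dist_int_le: "dist_int x \<le> \<bar>x - of_int n\<bar>"
proof (cases "n \<le> \<lfloor>x\<rfloor>")
  case True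
  then have "frac x \<le> x - of_int n" unfolding frac_def by linarith
  then show ?thesis unfolding dist_int_def using frac_ge_0[of x] by linarith
next
  case False
  then have "1 - frac x \<le> of_int n - x" unfolding frac_def by linarith
  then show ?thesis unfolding dist_int_def using frac_lt_1[of x] by linarith
qed

lemma dist_int_attained: obtains n :: int where "dist_int x = \<bar>x - of_int n\<bar>"
proof (cases "frac x \<le> 1 - frac x")
  case True
  then have "dist_int x = \<bar>x - of_int \<lfloor>x\<rfloor>\<bar>" unfolding dist_int_def frac_def by simp
  then show ?thesis by (rule that)
next
  case False
  then have "dist_int x = \<bar>x - of_int (\<lfloor>x\<rfloor> + 1)\<bar>" unfolding dist_int_def frac_def by simp
  then show ?thesis by (rule that)
qed

lemma dist_int_nonneg: "dist_int x \<ge> 0"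
  unfolding dist_int_def using frac_ge_0[of x] frac_lt_1[of x] by simp

lemma dist_int_le_half: "dist_int x \<le> 1/2"
  unfolding dist_int_def by (auto simp: min_def)

lemma dist_int_le_abs: "dist_int x \<le> \<bar>x\<bar>"
  using dist_int_le[of x 0] by simp

lemma dist_int_add_int: "dist_int (x + of_int k) = dist_int x"
proof -
  obtain n where n: "dist_int x = \<bar>x - of_int n\<bar>" by (rule dist_int_attained)
  obtain m where m: "dist_int (x + of_int k) = \<bar>x + of_int k - of_int m\<bar>" by (rule dist_int_attained)
  have "dist_int (x + of_int k) \<le> \<bar>x + of_int k - of_int (n + k)\<bar>" by (rule dist_int_le)
  moreover have "dist_int x \<le> \<bar>x - of_int (m - k)\<bar>" by (rule dist_int_le)
  ultimately show ?thesis using n m by simp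
qed

lemma dist_int_triangle: "dist_int (x + y) \<le> dist_int x + dist_int y"
proof -
  obtain n where n: "dist_int x = \<bar>x - of_int n\<bar>" by (rule dist_int_attained)
  obtain m where m: "dist_int y = \<bar>y - of_int m\<bar>" by (rule dist_int_attained)
  have "dist_int (x + y) \<le> \<bar>x + y - of_int (n + m)\<bar>" by (rule dist_int_le)
  then show ?thesis using n m by simp
qed

lemma sin_ge_third:
  assumes "0 \<le> t" "t \<le> pi / 2"
  shows "t / 3 \<le> sin t"
proof -
  have taylor: "(\<Sum>m<3. sin_coeff m * t ^ m) = t"
    by (simp add: numeral_3_eq_3 sin_coeff_def)
  have "\<bar>sin t - t\<bar> \<le> inverse (fact 3) * \<bar>t\<bar> ^ 3"
    using Maclaurin_sin_bound[of t 3] unfolding taylor .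
  then have "\<bar>sin t - t\<bar> \<le> t^3/6"
    using assms by (simp add: fact_numeral)
  then have "t - t^3/6 \<le> sin t"
    unfolding abs_le_iff by linarith
  moreover have "t^3/6 \<le> 2*t/3"
  proof -
    have "t \<le> 2" using assms pi_less_4 by linarith
    then have "t^2 \<le> 4" using assms power_mono[of t 2 2] by simp
    then have "t * t^2 \<le> t * 4" using assms by (intro mult_left_mono) auto
    then show ?thesis by (simp add: power3_eq_cube power2_eq_square mult_ac)
  qed
  ultimately show ?thesis by linarith
qed

lemma norm_e2pi_minus_1_ge: "2 * dist_int x \<le> norm (e2pi x - 1)"
proof -
  obtain n where n: "dist_int x = \<bar>x - of_int n\<bar>" by (rule dist_int_attained)
  define y where "y = x - of_int n"
  have ey: "e2pi x = e2pi y"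
    using e2pi_add[of y "of_int n"] by (simp add: y_def e2pi_of_int)
  have y: "\<bar>y\<bar> \<le> 1/2" using n dist_int_le_half[of x] y_def by simp
  have "(norm (e2pi y - 1))^2 = 2 - 2 * cos (2*pi*y)"
    using sin_cos_squared_add[of "2*pi*y"]
    by (simp add: e2pi_def cmod_def cis.code power2_eq_square algebra_simps)
  also have "\<dots> = (2 * sin (pi * \<bar>y\<bar>))^2"
    using cos_double_sin[of "pi * \<bar>y\<bar>"]
    by (cases "y \<ge> 0") (auto simp: mult_ac power_mult_distrib)
  finally have sq: "(norm (e2pi y - 1))^2 = (2 * sin (pi * \<bar>y\<bar>))^2" .
  have "pi * \<bar>y\<bar> \<le> pi * 1" using y by (intro mult_left_mono) auto
  then have "0 \<le> sin (pi * \<bar>y\<bar>)" by (intro sin_ge_zero) auto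
  then have "norm (e2pi y - 1) = 2 * sin (pi * \<bar>y\<bar>)"
    using sq by (metis mult_nonneg_nonneg norm_ge_zero power2_eq_imp_eq zero_le_numeral)
  moreover have "pi * \<bar>y\<bar> / 3 \<le> sin (pi * \<bar>y\<bar>)" using y by (intro sin_ge_third) auto
  moreover have "3 * \<bar>y\<bar> \<le> pi * \<bar>y\<bar>" using pi_gt3 by (intro mult_right_mono) auto
  ultimately show ?thesis using ey n y_def by simp
qed

lemma sum_e2pi_grid:
  assumes M: "M > 0" and k: "\<bar>k\<bar> < int M"
  shows "(\<Sum>m<M. e2pi (of_int k * (x - real m / real M))) = (if k = 0 then of_nat M else 0)"
proof (cases "k = 0")
  case True then show ?thesis by simp
next
  case False
  define w where "w = e2pi (- (of_int k / real M))"
  have summand: "e2pi (of_int k * (x - real m / real M)) = e2pi (of_int k * x) * w ^ m" for m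
    unfolding w_def e2pi_power by (simp add: e2pi_add[symmetric] right_diff_distrib mult.commute)
  have "w ^ M = e2pi (of_int (- k))"
    unfolding w_def e2pi_power using M by simp
  then have wM: "w ^ M = 1" by (simp only: e2pi_of_int)
  have "w \<noteq> 1"
  proof
    assume "w = 1"
    then obtain n :: int where n: "- (of_int k / real M) = of_int n"
      unfolding w_def by (rule e2pi_eq_1_imp_int)
    then have "of_int k = - (of_int n * real M)" using M by (simp add: field_simps)
    then have kn: "k = - n * int M"
      by (metis mult_minus_left of_int_eq_iff of_int_minus of_int_mult of_int_of_nat_eq)
    then have "1 \<le> \<bar>n\<bar>" using False by auto
    then have "1 * int M \<le> \<bar>n\<bar> * int M" by (intro mult_right_mono) auto
    then have "\<bar>k\<bar> \<ge> int M" unfolding kn by (simp add: abs_mult)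
    then show False using k by simp
  qed
  then have "(\<Sum>m<M. w ^ m) = 0" using geometric_sum[of w M] wM by simp
  then show ?thesis using False by (simp add: summand flip: sum_distrib_left)
qed

lemma sum_trig_poly_grid:
  fixes s :: "'b \<Rightarrow> int"
  assumes "finite T" and M: "M > 0" and "\<forall>\<tau>\<in>T. \<bar>s \<tau>\<bar> < int M"
  shows "(\<Sum>m<M. \<Sum>\<tau>\<in>T. e2pi (of_int (s \<tau>) * (x - real m / real M)))
           = of_nat (M * card {\<tau>\<in>T. s \<tau> = 0})"
proof -
  have "(\<Sum>m<M. \<Sum>\<tau>\<in>T. e2pi (of_int (s \<tau>) * (x - real m / real M)))
        = (\<Sum>\<tau>\<in>T. if s \<tau> = 0 then of_nat M else 0)"
    using assms by (subst sum.swap) (intro sum.cong refl sum_e2pi_grid[OF M], auto)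
  also have "\<dots> = of_nat (M * card {\<tau>\<in>T. s \<tau> = 0})"
    using assms(1) by (simp add: sum.If_cases Int_def mult.commute)
  finally show ?thesis .
qed

lemma sum_trig_poly_at_angles_approx:
  fixes s :: "'b \<Rightarrow> int" and \<theta> :: "'a \<Rightarrow> real"
  assumes T: "finite T" and "\<forall>\<tau>\<in>T. \<bar>s \<tau>\<bar> \<le> L" and "0 \<le> Q"
    and weyl: "\<forall>k::int. 1 \<le> k \<and> k \<le> L \<longrightarrow> cmod (\<Sum>j\<in>J. e2pi (of_int k * \<theta> j)) \<le> Q"
  shows "cmod ((\<Sum>j\<in>J. \<Sum>\<tau>\<in>T. e2pi (of_int (s \<tau>) * (\<theta> j - t)))
            - of_nat (card {\<tau>\<in>T. s \<tau> = 0} * card J)) \<le> real (card T) * Q"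
proof -
  define P where "P k = (\<Sum>j\<in>J. e2pi (of_int k * \<theta> j))" for k :: int
  have P_le: "cmod (P k) \<le> Q" if "k \<noteq> 0" "\<bar>k\<bar> \<le> L" for k
  proof (cases "k > 0")
    case True then show ?thesis using weyl that unfolding P_def by auto
  next
    case False
    then have "1 \<le> -k" "-k \<le> L" using that by auto
    then have "cmod (P (-k)) \<le> Q" using weyl unfolding P_def by blast
    moreover have "P k = cnj (P (-k))"
      unfolding P_def by (simp add: cnj_sum cnj_e2pi)
    ultimately show ?thesis by simp
  qed
  define Z where "Z = {\<tau>\<in>T. s \<tau> = 0}"
  have "(\<Sum>j\<in>J. \<Sum>\<tau>\<in>T. e2pi (of_int (s \<tau>) * (\<theta> j - t)))
        = (\<Sum>\<tau>\<in>T. e2pi (- (of_int (s \<tau>) * t)) * P (s \<tau>))"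
    unfolding P_def
    by (subst sum.swap) (simp add: sum_distrib_left e2pi_add[symmetric] right_diff_distrib)
  also have "\<dots> = (\<Sum>\<tau>\<in>Z. e2pi (- (of_int (s \<tau>) * t)) * P (s \<tau>))
                   + (\<Sum>\<tau>\<in>T - Z. e2pi (- (of_int (s \<tau>) * t)) * P (s \<tau>))"
    using T by (metis (no_types, lifting) Diff_subset Z_def add.commute mem_Collect_eq subsetI sum.subset_diff)
  also have "(\<Sum>\<tau>\<in>Z. e2pi (- (of_int (s \<tau>) * t)) * P (s \<tau>)) = of_nat (card Z * card J)"
    by (simp add: Z_def P_def)
  finally have "(\<Sum>j\<in>J. \<Sum>\<tau>\<in>T. e2pi (of_int (s \<tau>) * (\<theta> j - t))) - of_nat (card Z * card J)
        = (\<Sum>\<tau>\<in>T - Z. e2pi (- (of_int (s \<tau>) * t)) * P (s \<tau>))" by simp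
  also have "cmod \<dots> \<le> (\<Sum>\<tau>\<in>T - Z. cmod (e2pi (- (of_int (s \<tau>) * t)) * P (s \<tau>)))"
    by (rule norm_sum)
  also have "\<dots> \<le> (\<Sum>\<tau>\<in>T - Z. Q)"
    using assms(2) by (intro sum_mono) (auto simp: norm_mult Z_def intro!: P_le)
  also have "\<dots> \<le> real (card T) * Q"
    using T \<open>0 \<le> Q\<close> by (auto intro!: mult_right_mono card_mono)
  finally show ?thesis by (simp add: Z_def)
qed

section \<open>Dirichlet, Fejer and Jackson kernels\<close>

definition dirichlet_kernel :: "nat \<Rightarrow> real \<Rightarrow> complex" where
  "dirichlet_kernel K x = (\<Sum>a\<le>K. e2pi (real a * x))"

text \<open>The kernels below are not normalised: \<open>fejer_kernel K\<close> is \<open>K + 1\<close> times the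
  usual Fejer kernel, and \<open>jackson_kernel K\<close> is its square.\<close>

definition fejer_kernel :: "nat \<Rightarrow> real \<Rightarrow> real" where
  "fejer_kernel K x = (cmod (dirichlet_kernel K x))^2"

definition jackson_kernel :: "nat \<Rightarrow> real \<Rightarrow> real" where
  "jackson_kernel K x = (cmod (dirichlet_kernel K x))^4"

definition pair_diff :: "nat \<times> nat \<Rightarrow> int" where
  "pair_diff u = int (fst u) - int (snd u)"

definition quad_diff :: "(nat \<times> nat) \<times> (nat \<times> nat) \<Rightarrow> int" where
  "quad_diff w = pair_diff (fst w) + pair_diff (snd w)"

abbreviation pairs :: "nat \<Rightarrow> (nat \<times> nat) set" where
  "pairs K \<equiv> {..K} \<times> {..K}"

lemma abs_pair_diff_le: "u \<in> pairs K \<Longrightarrow> \<bar>pair_diff u\<bar> \<le> int K"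
  by (auto simp: pair_diff_def)

lemma abs_quad_diff_le: "w \<in> pairs K \<times> pairs K \<Longrightarrow> \<bar>quad_diff w\<bar> \<le> 2 * int K"
  using abs_pair_diff_le[of "fst w" K] abs_pair_diff_le[of "snd w" K]
  by (auto simp: quad_diff_def)

lemma fejer_kernel_expand:
  "complex_of_real (fejer_kernel K x) = (\<Sum>u\<in>pairs K. e2pi (of_int (pair_diff u) * x))"
proof -
  have "complex_of_real (fejer_kernel K x) = dirichlet_kernel K x * cnj (dirichlet_kernel K x)"
    unfolding fejer_kernel_def by (rule complex_norm_square)
  also have "\<dots> = (\<Sum>a\<le>K. \<Sum>c\<le>K. e2pi (real a * x) * e2pi (- (real c * x)))"
    by (simp add: dirichlet_kernel_def cnj_sum cnj_e2pi sum_product)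
  also have "\<dots> = (\<Sum>u\<in>pairs K. e2pi (of_int (pair_diff u) * x))"
    unfolding sum.cartesian_product
    by (intro sum.cong refl) (auto simp: e2pi_add[symmetric] pair_diff_def left_diff_distrib)
  finally show ?thesis .
qed

lemma jackson_kernel_eq_fejer_sq: "jackson_kernel K x = fejer_kernel K x * fejer_kernel K x"
  by (simp add: jackson_kernel_def fejer_kernel_def flip: power_add)

lemma jackson_kernel_expand:
  "complex_of_real (jackson_kernel K x) = (\<Sum>w\<in>pairs K \<times> pairs K. e2pi (of_int (quad_diff w) * x))"
proof -
  have "complex_of_real (jackson_kernel K x) =
     (\<Sum>u\<in>pairs K. \<Sum>v\<in>pairs K. e2pi (of_int (pair_diff u) * x) * e2pi (of_int (pair_diff v) * x))"
    by (simp add: jackson_kernel_eq_fejer_sq fejer_kernel_expand sum_product)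
  also have "\<dots> = (\<Sum>w\<in>pairs K \<times> pairs K. e2pi (of_int (quad_diff w) * x))"
    unfolding sum.cartesian_product
    by (intro sum.cong refl) (auto simp: e2pi_add[symmetric] distrib_right quad_diff_def)
  finally show ?thesis .
qed

lemma fejer_kernel_nonneg: "fejer_kernel K x \<ge> 0"
  by (simp add: fejer_kernel_def)

lemma jackson_kernel_nonneg: "jackson_kernel K x \<ge> 0"
  by (simp add: jackson_kernel_def)

lemma dirichlet_kernel_telescope:
  "dirichlet_kernel K x * (e2pi x - 1) = e2pi (real (Suc K) * x) - 1"
proof (induction K)
  case 0 then show ?case by (simp add: dirichlet_kernel_def)
next
  case (Suc K)
  then show ?case
    by (simp add: dirichlet_kernel_def algebra_simps e2pi_add[symmetric])
qed

lemma norm_dirichlet_kernel_le: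
  assumes "dist_int x > 0"
  shows "cmod (dirichlet_kernel K x) \<le> 1 / dist_int x"
proof -
  have "cmod (dirichlet_kernel K x) * cmod (e2pi x - 1) = cmod (e2pi (real (Suc K) * x) - 1)"
    using dirichlet_kernel_telescope[of K x] by (metis norm_mult)
  also have "\<dots> \<le> 2"
    using norm_triangle_ineq4[of "e2pi (real (Suc K) * x)" 1] by simp
  finally have "cmod (dirichlet_kernel K x) * (2 * dist_int x) \<le> 2"
    using norm_e2pi_minus_1_ge[of x] by (meson mult_left_mono norm_ge_zero order_trans)
  then show ?thesis using assms by (simp add: field_simps)
qed

lemma fejer_kernel_le:
  assumes "dist_int x > 0"
  shows "fejer_kernel K x \<le> 1 / (dist_int x)^2"
  using power_mono[OF norm_dirichlet_kernel_le[OF assms, of K], of 2]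
  by (simp add: fejer_kernel_def power_divide)

text \<open>The mean value of the Jackson kernel, i.e.\ its constant Fourier coefficient.\<close>

definition jackson_mass :: "nat \<Rightarrow> nat" where
  "jackson_mass K = card {w \<in> pairs K \<times> pairs K. quad_diff w = 0}"

lemma jackson_kernel_grid_sum:
  assumes "M > 2 * K"
  shows "(\<Sum>m<M. jackson_kernel K (x - real m / real M)) = real M * real (jackson_mass K)"
proof -
  have "complex_of_real (\<Sum>m<M. jackson_kernel K (x - real m / real M)) =
     (\<Sum>m<M. \<Sum>w\<in>pairs K \<times> pairs K. e2pi (of_int (quad_diff w) * (x - real m / real M)))"
    by (simp only: of_real_sum jackson_kernel_expand)
  also have "\<dots> = of_nat (M * jackson_mass K)"
    unfolding jackson_mass_def
    using assms abs_quad_diff_le[of _ K] by (intro sum_trig_poly_grid) force+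
  finally show ?thesis by (metis of_nat_mult of_real_eq_iff of_real_of_nat_eq)
qed

lemma jackson_mass_ge: "(real K + 1)^3 / 2 \<le> real (jackson_mass K)"
proof -
  define M where "M = 2 * K + 1"
  have "dirichlet_kernel K 0 = of_nat (K + 1)"
    by (simp add: dirichlet_kernel_def)
  then have D0: "cmod (dirichlet_kernel K 0) = real K + 1"
    by (simp only: norm_of_nat)
  have quartic: "(2 * x) * (x^3 / 2) = x^4" for x :: real
    by (simp add: power3_eq_cube power4_eq_xxxx)
  have "jackson_kernel K (0 - real 0 / real M) \<le> (\<Sum>m<M. jackson_kernel K (0 - real m / real M))"
    by (intro member_le_sum) (auto simp: M_def jackson_kernel_nonneg)
  also have "\<dots> = real M * real (jackson_mass K)"
    by (rule jackson_kernel_grid_sum) (simp add: M_def)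
  finally have peak: "(real K + 1)^4 \<le> real M * real (jackson_mass K)"
    by (simp add: jackson_kernel_def D0)
  have "real M * ((real K + 1)^3 / 2) \<le> (2 * (real K + 1)) * ((real K + 1)^3 / 2)"
    by (intro mult_right_mono) (auto simp: M_def)
  also have "\<dots> = (real K + 1)^4" by (rule quartic)
  also have "\<dots> \<le> real M * real (jackson_mass K)" by (rule peak)
  finally show ?thesis
    by (rule mult_left_le_imp_le) (simp add: M_def)
qed

lemma norm_of_real_minus_of_nat: "cmod (complex_of_real r - of_nat n) = \<bar>r - real n\<bar>"
  by (metis norm_of_real of_real_diff of_real_of_nat_eq)

lemma jackson_kernel_sum_approx:
  fixes \<theta> :: "'a \<Rightarrow> real"
  assumes "0 \<le> Q"
    and "\<forall>k::int. 1 \<le> k \<and> k \<le> 2 * int K \<longrightarrow> cmod (\<Sum>j\<in>J. e2pi (of_int k * \<theta> j)) \<le> Q"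
  shows "\<bar>(\<Sum>j\<in>J. jackson_kernel K (\<theta> j - t)) - real (jackson_mass K) * real (card J)\<bar>
           \<le> (real K + 1)^4 * Q"
proof -
  have "cmod (complex_of_real (\<Sum>j\<in>J. jackson_kernel K (\<theta> j - t)) - of_nat (jackson_mass K * card J))
          \<le> real (card (pairs K \<times> pairs K)) * Q"
    unfolding of_real_sum jackson_kernel_expand jackson_mass_def
    using assms abs_quad_diff_le[of _ K] by (intro sum_trig_poly_at_angles_approx) auto
  moreover have "card (pairs K \<times> pairs K) = (K + 1)^4"
    by (simp add: card_cartesian_product flip: power_add power2_eq_square)
  ultimately show ?thesis
    by (simp only: norm_of_real_minus_of_nat) (simp add: add.commute)
qed

lemma fejer_kernel_sum_le:
  fixes \<theta> :: "'a \<Rightarrow> real"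
  assumes "0 \<le> Q"
    and "\<forall>k::int. 1 \<le> k \<and> k \<le> int K \<longrightarrow> cmod (\<Sum>j\<in>J. e2pi (of_int k * \<theta> j)) \<le> Q"
  shows "(\<Sum>j\<in>J. fejer_kernel K (\<theta> j - t)) \<le> (real K + 1) * real (card J) + (real K + 1)^2 * Q"
proof -
  define D where "D = {u \<in> pairs K. pair_diff u = 0}"
  have "cmod (complex_of_real (\<Sum>j\<in>J. fejer_kernel K (\<theta> j - t)) - of_nat (card D * card J))
          \<le> real (card (pairs K)) * Q"
    unfolding of_real_sum fejer_kernel_expand D_def
    using assms abs_pair_diff_le[of _ K] by (intro sum_trig_poly_at_angles_approx) auto
  moreover have "card (pairs K) = (K + 1)^2"
    by (simp add: card_cartesian_product power2_eq_square)
  ultimately have "\<bar>(\<Sum>j\<in>J. fejer_kernel K (\<theta> j - t)) - real (card D * card J)\<bar> \<le> (real K + 1)^2 * Q"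
    by (simp only: norm_of_real_minus_of_nat) (simp add: add.commute)
  moreover have "D \<subseteq> (\<lambda>a. (a, a)) ` {..K}"
    by (auto simp: D_def pair_diff_def)
  then have "card D \<le> K + 1"
    using card_mono[OF _ \<open>D \<subseteq> _\<close>] card_image_le[of "{..K}" "\<lambda>a. (a, a)"] by simp
  then have "real (card D * card J) \<le> (real K + 1) * real (card J)"
    by (simp add: mult_right_mono)
  ultimately show ?thesis by linarith
qed

section \<open>Grid sums of a capped inverse square\<close>

definition capped_inv_sq :: "real \<Rightarrow> real \<Rightarrow> real" where
  "capped_inv_sq r s = (if s < r then 1 else r^2 / s^2)"

lemma capped_inv_sq_nonneg: "capped_inv_sq r s \<ge> 0"
  by (simp add: capped_inv_sq_def)

lemma capped_inv_sq_le_1: "r > 0 \<Longrightarrow> capped_inv_sq r s \<le> 1"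
  by (auto simp: capped_inv_sq_def divide_le_eq_1 power_mono)

lemma capped_inv_sq_antimono:
  assumes "r > 0" "s \<le> s'"
  shows "capped_inv_sq r s' \<le> capped_inv_sq r s"
proof (cases "s' < r \<or> s < r")
  case True
  then show ?thesis using assms capped_inv_sq_le_1[OF assms(1), of s'] by (auto simp: capped_inv_sq_def)
next
  case False
  then have "s^2 \<le> s'^2" "0 < s^2" "0 < s'^2" using assms by (auto intro: power_mono)
  then have "r^2 / s'^2 \<le> r^2 / s^2" by (intro divide_left_mono) (auto intro: mult_pos_pos)
  then show ?thesis using False by (simp add: capped_inv_sq_def)
qed

lemma capped_inv_sq_min_le: "capped_inv_sq r (min x y) \<le> capped_inv_sq r x + capped_inv_sq r y"
  using capped_inv_sq_nonneg[of r x] capped_inv_sq_nonneg[of r y] by (simp add: min_def)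

lemma sum_inverse_squares_tail:
  assumes "1 \<le> T" "T \<le> n"
  shows "(\<Sum>i\<in>{T<..n}. 1 / (real i)^2) \<le> 1 / real T - 1 / real n"
  using assms(2)
proof (induction n rule: dec_induct)
  case base then show ?case by simp
next
  case (step n)
  have "1 / (real (Suc n))^2 \<le> 1 / real n - 1 / real (Suc n)"
  proof -
    have "1 / real n - 1 / real (Suc n) = 1 / (real n * real (Suc n))"
      using assms step by (simp add: field_simps)
    moreover have "real n * real (Suc n) \<le> (real (Suc n))^2"
      by (simp add: power2_eq_square)
    ultimately show ?thesis using assms step by (simp add: frac_le)
  qed
  moreover have "{T<..Suc n} = insert (Suc n) {T<..n}" using step by auto
  ultimately show ?case using step by simp
qed

text \<open>The weight of a grid point of spacing \<open>1/M\<close> lying \<open>i\<close> steps away from a given point,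
  up to half a step.\<close>

definition grid_weight :: "real \<Rightarrow> nat \<Rightarrow> nat \<Rightarrow> real" where
  "grid_weight r M i = capped_inv_sq r (max 0 ((real i - 1/2) / real M))"

lemma grid_weight_nonneg: "grid_weight r M i \<ge> 0"
  by (simp add: grid_weight_def capped_inv_sq_nonneg)

lemma sum_grid_weight_le:
  assumes r: "r > 0" and M: "M > 0"
  shows "(\<Sum>i\<le>M. grid_weight r M i) \<le> 4 * r * real M + 2"
proof -
  define T where "T = nat \<lceil>2 * r * real M\<rceil>"
  have rM: "0 < 2 * r * real M" using r M by simp
  have T1: "real T \<ge> 2 * r * real M" and T2: "real T < 2 * r * real M + 1"
    unfolding T_def using rM by linarith+
  have T0: "1 \<le> T" using T1 rM by linarith
  have head: "(\<Sum>i\<in>A. grid_weight r M i) \<le> real (card A)" for A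
    using sum_mono[of A "grid_weight r M" "\<lambda>_. 1"] capped_inv_sq_le_1[OF r]
    by (simp add: grid_weight_def)
  show ?thesis
  proof (cases "M \<le> T")
    case True
    then show ?thesis using head[of "{..M}"] T2 rM by simp
  next
    case False
    have split: "{..M} = {..T} \<union> {T<..M}" using False by auto
    have "(\<Sum>i\<le>M. grid_weight r M i) = (\<Sum>i\<le>T. grid_weight r M i) + (\<Sum>i\<in>{T<..M}. grid_weight r M i)"
      unfolding split by (rule sum.union_disjoint) auto
    also have "(\<Sum>i\<le>T. grid_weight r M i) \<le> real T + 1" using head[of "{..T}"] by simp
    also have "(\<Sum>i\<in>{T<..M}. grid_weight r M i) \<le> (\<Sum>i\<in>{T<..M}. (4 * r^2 * (real M)^2) * (1 / (real i)^2))"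
    proof (rule sum_mono)
      fix i assume i: "i \<in> {T<..M}"
      then have i1: "real i \<ge> 1" "real i > real T" using T0 by auto
      have b: "real i / (2 * real M) > r"
        using i1 T1 M by (simp add: field_simps)
      have "grid_weight r M i \<le> capped_inv_sq r (real i / (2 * real M))"
        unfolding grid_weight_def using i1 M r by (intro capped_inv_sq_antimono) (auto simp: field_simps)
      also have "\<dots> = (4 * r^2 * (real M)^2) * (1 / (real i)^2)"
        using b by (simp add: capped_inv_sq_def power_divide field_simps power2_eq_square)
      finally show "grid_weight r M i \<le> (4 * r^2 * (real M)^2) * (1 / (real i)^2)" .
    qed
    also have "\<dots> = (4 * r^2 * (real M)^2) * (\<Sum>i\<in>{T<..M}. 1 / (real i)^2)"
      by (simp add: sum_distrib_left)
    also have "\<dots> \<le> (4 * r^2 * (real M)^2) * (1 / real T)"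
      using sum_inverse_squares_tail[OF T0, of M] False
      by (intro mult_left_mono) (auto simp: diff_le_eq intro: order_trans)
    also have "\<dots> \<le> (4 * r^2 * (real M)^2) * (1 / (2 * r * real M))"
      using T1 rM by (intro mult_left_mono divide_left_mono) auto
    also have "\<dots> = 2 * r * real M" using r M by (simp add: field_simps power2_eq_square)
    finally show ?thesis using T2 by linarith
  qed
qed

lemma bij_betw_shift_mod:
  "bij_betw (\<lambda>m. nat ((int m - k) mod int M)) {..<M} {..<M}"
proof -
  let ?j = "\<lambda>m. nat ((int m - k) mod int M)"
  have into: "?j ` {..<M} \<subseteq> {..<M}"
    by (auto simp: nat_less_iff)
  have "inj_on ?j {..<M}"
  proof
    fix m1 m2 assume m: "m1 \<in> {..<M}" "m2 \<in> {..<M}" and "?j m1 = ?j m2"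
    moreover have "int M > 0" using m by auto
    ultimately have "(int m1 - k) mod int M = (int m2 - k) mod int M"
      by (simp add: eq_nat_nat_iff)
    then have "int m1 mod int M = int m2 mod int M"
      by (metis diff_add_cancel mod_add_left_eq)
    then show "m1 = m2" using m by simp
  qed
  then show ?thesis
    using into by (simp add: bij_betw_def endo_inj_surj)
qed

lemma dist_int_grid_point:
  assumes "j < M"
  shows "dist_int (real j / real M) = real (min j (M - j)) / real M"
proof -
  have "0 \<le> real j / real M" "real j / real M < 1" using assms by (auto simp: field_simps)
  then have "frac (real j / real M) = real j / real M" by (simp add: frac_eq)
  then have "dist_int (real j / real M) = min (real j) (real M - real j) / real M"
    using assms by (simp add: dist_int_def min_divide_distrib_right diff_divide_distrib)
  moreover have "real (min j (M - j)) = min (real j) (real M - real j)"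
    using assms by (simp add: of_nat_min of_nat_diff)
  ultimately show ?thesis by simp
qed

text \<open>Rounding \<open>M c\<close> to the nearest integer \<open>k\<close> moves the grid point \<open>m / M\<close> to the
  grid point \<open>((m - k) mod M) / M\<close> of the unshifted grid, at the cost of half a step.\<close>

lemma dist_int_shifted_grid_le:
  fixes c :: real and m M :: nat
  assumes M: "M > 0"
  defines "k \<equiv> \<lfloor>real M * c + 1/2\<rfloor>"
  shows "dist_int (real (nat ((int m - k) mod int M)) / real M)
           \<le> dist_int (real m / real M - c) + 1 / (2 * real M)"
proof -
  define \<epsilon> where "\<epsilon> = (real_of_int k - real M * c) / real M"
  define j where "j = nat ((int m - k) mod int M)"
  define q where "q = (int m - k) div int M"
  have "\<bar>real_of_int k - real M * c\<bar> \<le> 1/2" unfolding k_def by linarith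
  then have eps: "dist_int (- \<epsilon>) \<le> 1 / (2 * real M)"
    using M dist_int_le_abs[of "- \<epsilon>"] unfolding \<epsilon>_def by (simp add: field_simps abs_divide)
  have "int m - k = int M * q + int j"
    unfolding j_def q_def using M by simp
  then have "real m - of_int k = real M * of_int q + real j"
    by (metis of_int_add of_int_diff of_int_mult of_int_of_nat_eq)
  then have "real j / real M = (real m / real M - c) + (- \<epsilon>) + of_int (- q)"
    unfolding \<epsilon>_def using M by (simp add: field_simps)
  then have "dist_int (real j / real M) \<le> dist_int (real m / real M - c) + dist_int (- \<epsilon>)"
    using dist_int_triangle[of "real m / real M - c" "- \<epsilon>"] by (simp only: dist_int_add_int)
  then show ?thesis using eps by (simp add: j_def)
qed

lemma sum_capped_inv_sq_grid_le:
  assumes r: "r > 0" and M: "M > 0"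
  shows "(\<Sum>m<M. capped_inv_sq r (dist_int (real m / real M - c))) \<le> 8 * r * real M + 4"
proof -
  define k where "k = \<lfloor>real M * c + 1/2\<rfloor>"
  define j where "j m = nat ((int m - k) mod int M)" for m
  have near: "capped_inv_sq r (dist_int (real m / real M - c))
                \<le> grid_weight r M (j m) + grid_weight r M (M - j m)" for m
  proof -
    have "j m < M" unfolding j_def using M by (simp add: nat_less_iff)
    then have "(real (min (j m) (M - j m)) - 1/2) / real M \<le> dist_int (real m / real M - c)"
      using dist_int_shifted_grid_le[OF M, where c = c and m = m] dist_int_grid_point[of "j m" M] M
      by (simp add: j_def k_def field_simps)
    then have "capped_inv_sq r (dist_int (real m / real M - c)) \<le> grid_weight r M (min (j m) (M - j m))"
      unfolding grid_weight_def using dist_int_nonneg by (intro capped_inv_sq_antimono[OF r]) auto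
    also have "\<dots> \<le> grid_weight r M (j m) + grid_weight r M (M - j m)"
      using grid_weight_nonneg[of r M "j m"] grid_weight_nonneg[of r M "M - j m"] by (simp add: min_def)
    finally show ?thesis .
  qed
  have "(\<Sum>m<M. capped_inv_sq r (dist_int (real m / real M - c)))
          \<le> (\<Sum>m<M. grid_weight r M (j m) + grid_weight r M (M - j m))"
    by (intro sum_mono near)
  also have "\<dots> = (\<Sum>i<M. grid_weight r M i + grid_weight r M (M - i))"
    using bij_betw_shift_mod[of k M] unfolding j_def
    by (rule sum.reindex_bij_betw[where g = "\<lambda>i. grid_weight r M i + grid_weight r M (M - i)"])
  also have "\<dots> = (\<Sum>i<M. grid_weight r M i) + (\<Sum>i<M. grid_weight r M (Suc i))"
    using sum.nat_diff_reindex[of "\<lambda>i. grid_weight r M (Suc i)" M]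
    by (simp add: sum.distrib Suc_diff_Suc)
  also have "\<dots> \<le> 2 * (\<Sum>i\<le>M. grid_weight r M i)"
    using sum.atMost_Suc[of "grid_weight r M" M] sum.atMost_Suc_shift[of "grid_weight r M" M]
      grid_weight_nonneg[of r M 0] grid_weight_nonneg[of r M M]
    by (simp add: lessThan_Suc_atMost[symmetric])
  also have "\<dots> \<le> 8 * r * real M + 4"
    using sum_grid_weight_le[OF r M] by simp
  finally show ?thesis .
qed

lemma real_interval_between_Inf_Sup:
  assumes "real_interval I" "I \<noteq> {}" "bdd_below I" "bdd_above I"
  shows "I \<subseteq> {Inf I..Sup I}" "{Inf I<..<Sup I} \<subseteq> I"
proof -
  show "I \<subseteq> {Inf I..Sup I}"
    using assms by (auto intro: cInf_lower cSup_upper)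
  show "{Inf I<..<Sup I} \<subseteq> I"
  proof
    fix y assume "y \<in> {Inf I<..<Sup I}"
    then obtain x z where "x \<in> I" "x < y" "z \<in> I" "y < z"
      using assms by (meson cInf_less_iff greaterThanLessThan_iff less_cSup_iff)
    then show "y \<in> I" using assms(1) unfolding real_interval_def by (meson less_imp_le)
  qed
qed

lemma Inf_Sup_in_half_open_unit:
  fixes I :: "real set"
  assumes "I \<noteq> {}" "I \<subseteq> {-1/2..<1/2}"
  shows "bdd_below I" "bdd_above I" "-1/2 \<le> Inf I" "Inf I \<le> Sup I" "Sup I \<le> 1/2"
proof -
  show bdd: "bdd_below I" "bdd_above I"
    by (rule bdd_below_mono[OF _ assms(2)], simp) (rule bdd_above_mono[OF _ assms(2)], simp)
  show "-1/2 \<le> Inf I" using assms by (intro cInf_greatest) auto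
  show "Sup I \<le> 1/2" using assms by (intro cSup_least) auto
  show "Inf I \<le> Sup I"
    using assms bdd by (meson cInf_le_cSup)
qed

lemma interval_length_bounds:
  assumes "I \<subseteq> {-1/2..<1/2}"
  shows "0 \<le> interval_length I" "interval_length I \<le> 1"
  using Inf_Sup_in_half_open_unit[OF _ assms]
  by (cases "I = {}"; simp add: interval_length_def)+

lemma dist_int_to_boundary_le:
  fixes u v a b :: real
  assumes u: "-1/2 \<le> u" "u < 1/2" and v: "-1/2 \<le> v" "v < 1/2"
    and ab: "-1/2 \<le> a" "a \<le> b" "b \<le> 1/2"
    and separated: "(a \<le> u \<and> u \<le> b \<and> (v \<le> a \<or> b \<le> v)) \<or> (a \<le> v \<and> v \<le> b \<and> (u \<le> a \<or> b \<le> u))"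
  shows "min (dist_int (v - a)) (dist_int (v - b)) \<le> dist_int (u - v)"
proof -
  obtain n where n: "dist_int (u - v) = \<bar>u - v - of_int n\<bar>" by (rule dist_int_attained)
  have a0: "dist_int (v - a) \<le> \<bar>v - a - of_int 0\<bar>"
    and a1: "dist_int (v - a) \<le> \<bar>v - a - of_int 1\<bar>"
    and b0: "dist_int (v - b) \<le> \<bar>v - b - of_int 0\<bar>"
    and b1: "dist_int (v - b) \<le> \<bar>v - b - of_int (-1)\<bar>"
    by (rule dist_int_le)+
  consider "n = 0" | "n \<ge> 1" | "n \<le> -1" by linarith
  then have "min (dist_int (v - a)) (dist_int (v - b)) \<le> \<bar>u - v - of_int n\<bar>"
  proof cases
    case 1
    then show ?thesis using a0 b0 separated by (auto simp: abs_if min_def split: if_splits)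
  next
    case 2
    then have "\<bar>u - v - of_int n\<bar> \<ge> 1 + v - u" using u v by (simp add: abs_if)
    then show ?thesis using a0 b1 separated u v ab by (auto simp: abs_if min_def split: if_splits)
  next
    case 3
    then have "\<bar>u - v - of_int n\<bar> \<ge> u - v + 1" using u v by (simp add: abs_if)
    then show ?thesis using a1 b0 separated u v ab by (auto simp: abs_if min_def split: if_splits)
  qed
  then show ?thesis using n by simp
qed

lemma card_nats_in_closed_le:
  assumes "0 \<le> \<alpha>" "\<alpha> \<le> \<beta>"
  shows "real (card {m::nat. \<alpha> \<le> real m \<and> real m \<le> \<beta>}) \<le> \<beta> - \<alpha> + 1"
proof -
  have "{m::nat. \<alpha> \<le> real m \<and> real m \<le> \<beta>} \<subseteq> {nat \<lceil>\<alpha>\<rceil>..nat \<lfloor>\<beta>\<rfloor>}"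
    using assms by (auto simp: le_nat_iff ceiling_le_iff le_floor_iff nat_le_iff)
  then have "card {m::nat. \<alpha> \<le> real m \<and> real m \<le> \<beta>} \<le> Suc (nat \<lfloor>\<beta>\<rfloor>) - nat \<lceil>\<alpha>\<rceil>"
    using card_mono[of "{nat \<lceil>\<alpha>\<rceil>..nat \<lfloor>\<beta>\<rfloor>}"] by simp
  moreover have "nat \<lceil>\<alpha>\<rceil> \<le> Suc (nat \<lfloor>\<beta>\<rfloor>)" "real (nat \<lfloor>\<beta>\<rfloor>) \<le> \<beta>" "\<alpha> \<le> real (nat \<lceil>\<alpha>\<rceil>)"
    using assms by linarith+
  ultimately show ?thesis by (simp add: of_nat_diff)
qed

lemma card_nats_in_open_ge:
  assumes "0 \<le> \<alpha>"
  shows "\<beta> - \<alpha> - 1 \<le> real (card {m::nat. \<alpha> < real m \<and> real m < \<beta>})"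
proof (cases "\<beta> - \<alpha> - 1 \<le> 0")
  case False
  define lo where "lo = nat (\<lfloor>\<alpha>\<rfloor> + 1)"
  define hi where "hi = nat (\<lceil>\<beta>\<rceil> - 1)"
  have lo: "real lo = of_int \<lfloor>\<alpha>\<rfloor> + 1" and hi: "real hi = of_int \<lceil>\<beta>\<rceil> - 1"
    unfolding lo_def hi_def using assms False by (simp_all add: of_nat_nat)
  have "{lo..hi} \<subseteq> {m::nat. \<alpha> < real m \<and> real m < \<beta>}"
    using lo hi by (auto simp flip: of_nat_le_iff) linarith+
  moreover have "finite {m::nat. \<alpha> < real m \<and> real m < \<beta>}"
    by (rule finite_subset[of _ "{..nat \<lceil>\<beta>\<rceil>}"]) (auto simp: le_nat_iff, linarith)
  ultimately have "card {lo..hi} \<le> card {m::nat. \<alpha> < real m \<and> real m < \<beta>}"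
    by (rule card_mono[rotated])
  moreover have "lo \<le> hi" using lo hi False by linarith
  ultimately have "real hi + 1 - real lo \<le> real (card {m::nat. \<alpha> < real m \<and> real m < \<beta>})"
    by (simp add: of_nat_diff flip: of_nat_le_iff)
  then show ?thesis
    using lo hi of_int_floor_le[of \<alpha>] le_of_int_ceiling[of \<beta>] by linarith
qed simp

lemma card_grid_in_interval:
  assumes M: "M > 0" and between: "{a<..<b} \<subseteq> I" "I \<subseteq> {a..b}"
    and ab: "-1/2 \<le> a" "a \<le> b" "b \<le> 1/2"
  shows "\<bar>real (card {m\<in>{..<M}. real m / real M - 1/2 \<in> I}) - real M * (b - a)\<bar> \<le> 1"
proof -
  define G where "G = {m\<in>{..<M}. real m / real M - 1/2 \<in> I}"
  define \<alpha> where "\<alpha> = real M * (a + 1/2)"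
  define \<beta> where "\<beta> = real M * (b + 1/2)"
  have \<alpha>: "0 \<le> \<alpha>" "\<alpha> \<le> \<beta>" and \<beta>: "\<beta> \<le> real M"
    using ab M by (simp_all add: \<alpha>_def \<beta>_def)
  have scale: "a < real m / real M - 1/2 \<and> real m / real M - 1/2 < b \<longleftrightarrow> \<alpha> < real m \<and> real m < \<beta>"
    "a \<le> real m / real M - 1/2 \<and> real m / real M - 1/2 \<le> b \<longleftrightarrow> \<alpha> \<le> real m \<and> real m \<le> \<beta>" for m
    using M by (auto simp: \<alpha>_def \<beta>_def field_simps)
  have "G \<subseteq> {m::nat. \<alpha> \<le> real m \<and> real m \<le> \<beta>}"
    using between(2) scale(2) unfolding G_def by fastforce
  moreover have "finite {m::nat. \<alpha> \<le> real m \<and> real m \<le> \<beta>}"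
    by (rule finite_subset[of _ "{..nat \<lceil>\<beta>\<rceil>}"]) (auto simp: le_nat_iff, linarith)
  ultimately have "real (card G) \<le> \<beta> - \<alpha> + 1"
    using card_mono card_nats_in_closed_le[OF \<alpha>] by (meson of_nat_le_iff order_trans)
  moreover have "{m::nat. \<alpha> < real m \<and> real m < \<beta>} \<subseteq> G"
  proof
    fix m assume "m \<in> {m::nat. \<alpha> < real m \<and> real m < \<beta>}"
    then have "\<alpha> < real m" "real m < \<beta>" by auto
    then show "m \<in> G" using \<beta> between(1) scale(1)[of m] unfolding G_def by auto
  qed
  then have "card {m::nat. \<alpha> < real m \<and> real m < \<beta>} \<le> card G"
    by (rule card_mono[rotated]) (simp add: G_def)
  then have "\<beta> - \<alpha> - 1 \<le> real (card G)"
    using card_nats_in_open_ge[OF \<alpha>(1), of \<beta>] by linarith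
  ultimately show ?thesis unfolding G_def \<alpha>_def \<beta>_def by (simp add: algebra_simps abs_le_iff)
qed

section \<open>An Erdos-Turan type inequality\<close>

lemma jackson_mass_bound: "(real K + 1)^4 \<le> real (jackson_mass K) * (2 * (real K + 1))"
proof -
  have "(real K + 1)^4 = ((real K + 1)^3 / 2) * (2 * (real K + 1))"
    by (simp add: power3_eq_cube power4_eq_xxxx)
  also have "\<dots> \<le> real (jackson_mass K) * (2 * (real K + 1))"
    using jackson_mass_ge by (intro mult_right_mono) auto
  finally show ?thesis .
qed

lemma jackson_kernel_sum_le:
  fixes \<theta> :: "'a \<Rightarrow> real"
  assumes Q: "0 \<le> Q"
    and weyl: "\<forall>k::int. 1 \<le> k \<and> k \<le> 2 * int K \<longrightarrow> cmod (\<Sum>j\<in>J. e2pi (of_int k * \<theta> j)) \<le> Q"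
  shows "(\<Sum>j\<in>J. jackson_kernel K (\<theta> j - t))
           \<le> real (jackson_mass K) * (real (card J) + 2 * (real K + 1) * Q)"
proof -
  have "(real K + 1)^4 * Q \<le> real (jackson_mass K) * (2 * (real K + 1)) * Q"
    using jackson_mass_bound Q by (rule mult_right_mono)
  then show ?thesis
    using jackson_kernel_sum_approx[OF Q weyl, of t] by (simp add: algebra_simps abs_le_iff)
qed

lemma jackson_kernel_le_fejer_div:
  assumes "0 < \<sigma>" "\<sigma> \<le> dist_int x"
  shows "jackson_kernel K x \<le> fejer_kernel K x / \<sigma>^2"
proof -
  have "\<sigma>^2 \<le> (dist_int x)^2" using assms by (intro power_mono) auto
  have "jackson_kernel K x = fejer_kernel K x * fejer_kernel K x"
    by (rule jackson_kernel_eq_fejer_sq)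
  also have "\<dots> \<le> fejer_kernel K x * (1 / (dist_int x)^2)"
    using assms by (intro mult_left_mono fejer_kernel_le fejer_kernel_nonneg) auto
  also have "\<dots> \<le> fejer_kernel K x * (1 / \<sigma>^2)"
    using assms \<open>\<sigma>^2 \<le> _\<close> by (intro mult_left_mono divide_left_mono fejer_kernel_nonneg) auto
  finally show ?thesis by simp
qed

text \<open>Only angles on the other side of \<open>I\<close> from \<open>t\<close> contribute, and they lie at distance at
  least \<open>\<sigma>\<close> from \<open>t\<close>, where the Jackson kernel is at most \<open>1/\<sigma>\<^sup>2\<close> times the Fejer kernel.\<close>

lemma jackson_mismatch_sum_le:
  fixes \<theta> :: "'a \<Rightarrow> real"
  assumes Q: "0 \<le> Q"
    and weyl: "\<forall>k::int. 1 \<le> k \<and> k \<le> 2 * int K \<longrightarrow> cmod (\<Sum>j\<in>J. e2pi (of_int k * \<theta> j)) \<le> Q"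
    and \<theta>J: "\<forall>j\<in>J. \<theta> j \<in> {-1/2..<1/2}" and t: "-1/2 \<le> t" "t < 1/2"
    and between: "{a<..<b} \<subseteq> I" "I \<subseteq> {a..b}" and ab: "-1/2 \<le> a" "a \<le> b" "b \<le> 1/2"
  shows "(\<Sum>j\<in>J. if (\<theta> j \<in> I) \<noteq> (t \<in> I) then jackson_kernel K (\<theta> j - t) else 0)
           \<le> real (jackson_mass K) * (real (card J) + 2 * (real K + 1) * Q)
             * capped_inv_sq (2 / (real K + 1)) (min (dist_int (t - a)) (dist_int (t - b)))"
    (is "?B \<le> ?A * ?V * capped_inv_sq ?r ?\<sigma>")
proof (cases "?\<sigma> < ?r")
  case True
  have "?B \<le> (\<Sum>j\<in>J. jackson_kernel K (\<theta> j - t))"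
    by (intro sum_mono) (auto simp: jackson_kernel_nonneg)
  also have "\<dots> \<le> ?A * ?V" by (rule jackson_kernel_sum_le[OF Q weyl])
  finally show ?thesis using True by (simp add: capped_inv_sq_def)
next
  case False
  then have \<sigma>: "?\<sigma> > 0" by (smt (verit) divide_pos_pos of_nat_0_le_iff)
  have "?\<sigma> \<le> dist_int (\<theta> j - t)" if "j \<in> J" "(\<theta> j \<in> I) \<noteq> (t \<in> I)" for j
  proof -
    have "(a \<le> \<theta> j \<and> \<theta> j \<le> b \<and> (t \<le> a \<or> b \<le> t)) \<or> (a \<le> t \<and> t \<le> b \<and> (\<theta> j \<le> a \<or> b \<le> \<theta> j))"
      using that between by (auto simp: subset_iff not_le)
    then show ?thesis using dist_int_to_boundary_le \<theta>J that t ab by auto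
  qed
  then have "?B \<le> (\<Sum>j\<in>J. fejer_kernel K (\<theta> j - t)) / ?\<sigma>^2"
    unfolding sum_divide_distrib using \<sigma>
    by (intro sum_mono) (auto intro: jackson_kernel_le_fejer_div simp: fejer_kernel_nonneg)
  also have "\<dots> \<le> ((real K + 1) * real (card J) + (real K + 1)^2 * Q) / ?\<sigma>^2"
    using weyl by (intro divide_right_mono fejer_kernel_sum_le[OF Q]) auto
  also have "\<dots> \<le> ?A * ?V * (?r^2 / ?\<sigma>^2)"
  proof -
    have "(real K + 1)^3 / 2 * ?r^2 = 2 * (real K + 1)"
      by (simp add: power2_eq_square power3_eq_cube)
    then have "real K + 1 \<le> ?A * ?r^2"
      using mult_right_mono[OF jackson_mass_ge, of "?r^2" K] by simp
    then have AV: "(real K + 1) * ?V \<le> ?A * ?r^2 * ?V"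
      using Q by (intro mult_right_mono) auto
    have "(real K + 1) * ?V = (real K + 1) * real (card J) + 2 * ((real K + 1)^2 * Q)"
      by (simp add: power2_eq_square algebra_simps)
    moreover have "0 \<le> (real K + 1)^2 * Q" using Q by simp
    ultimately have "(real K + 1) * real (card J) + (real K + 1)^2 * Q \<le> ?A * ?V * ?r^2"
      using AV by (simp only: mult_ac)
    then show ?thesis using \<sigma> by (simp add: divide_right_mono)
  qed
  also have "\<dots> = ?A * ?V * capped_inv_sq ?r ?\<sigma>"
    using False by (simp add: capped_inv_sq_def)
  finally show ?thesis .
qed

lemma jackson_sampling_error_le:
  fixes \<theta> :: "'a \<Rightarrow> real"
  assumes Q: "0 \<le> Q"
    and weyl: "\<forall>k::int. 1 \<le> k \<and> k \<le> 2 * int K \<longrightarrow> cmod (\<Sum>j\<in>J. e2pi (of_int k * \<theta> j)) \<le> Q"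
    and \<theta>J: "\<forall>j\<in>J. \<theta> j \<in> {-1/2..<1/2}" and M: "M > 0"
    and between: "{a<..<b} \<subseteq> I" "I \<subseteq> {a..b}" and ab: "-1/2 \<le> a" "a \<le> b" "b \<le> 1/2"
  defines "t m \<equiv> real m / real M - 1/2"
  shows "\<bar>\<Sum>j\<in>J. \<Sum>m<M. (if \<theta> j \<in> I then jackson_kernel K (\<theta> j - t m) else 0)
                       - (if t m \<in> I then jackson_kernel K (\<theta> j - t m) else 0)\<bar>
           \<le> real (jackson_mass K) * (real (card J) + 2 * (real K + 1) * Q)
             * (16 * (2 / (real K + 1)) * real M + 8)"
    (is "\<bar>\<Sum>j\<in>J. \<Sum>m<M. ?D j m\<bar> \<le> ?A * ?V * (16 * ?r * real M + 8)")
proof -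
  define B where "B m = (\<Sum>j\<in>J. if (\<theta> j \<in> I) \<noteq> (t m \<in> I) then jackson_kernel K (\<theta> j - t m) else 0)" for m
  have AV: "0 \<le> ?A * ?V" using Q by simp
  have "\<bar>\<Sum>j\<in>J. \<Sum>m<M. ?D j m\<bar> \<le> (\<Sum>j\<in>J. \<Sum>m<M. \<bar>?D j m\<bar>)"
    by (rule order_trans[OF sum_abs sum_mono[OF sum_abs]])
  also have "\<dots> = (\<Sum>m<M. B m)"
    unfolding B_def by (subst sum.swap) (intro sum.cong refl, auto simp: jackson_kernel_nonneg)
  also have "\<dots> \<le> (\<Sum>m<M. ?A * ?V * (capped_inv_sq ?r (dist_int (real m / real M - (1/2 + a)))
                                        + capped_inv_sq ?r (dist_int (real m / real M - (1/2 + b)))))"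
  proof (rule sum_mono)
    fix m assume "m \<in> {..<M}"
    then have "B m \<le> ?A * ?V * capped_inv_sq ?r (min (dist_int (t m - a)) (dist_int (t m - b)))"
      unfolding B_def using ab between
      by (intro jackson_mismatch_sum_le Q weyl \<theta>J) (auto simp: t_def field_simps)
    also have "\<dots> \<le> ?A * ?V * (capped_inv_sq ?r (dist_int (t m - a)) + capped_inv_sq ?r (dist_int (t m - b)))"
      using AV by (intro mult_left_mono capped_inv_sq_min_le)
    finally show "B m \<le> ?A * ?V * (capped_inv_sq ?r (dist_int (real m / real M - (1/2 + a)))
                                        + capped_inv_sq ?r (dist_int (real m / real M - (1/2 + b))))"
      by (simp add: t_def algebra_simps)
  qed
  also have "\<dots> \<le> ?A * ?V * ((8 * ?r * real M + 4) + (8 * ?r * real M + 4))"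
    unfolding sum_distrib_left[symmetric] sum.distrib using AV M
    by (intro mult_left_mono add_mono sum_capped_inv_sq_grid_le) auto
  finally show ?thesis by (simp add: algebra_simps)
qed

lemma discrepancy_grid_le:
  fixes \<theta> :: "'a \<Rightarrow> real"
  assumes J: "finite J" and Q: "0 \<le> Q"
    and weyl: "\<forall>k::int. 1 \<le> k \<and> k \<le> 2 * int K \<longrightarrow> cmod (\<Sum>j\<in>J. e2pi (of_int k * \<theta> j)) \<le> Q"
    and \<theta>J: "\<forall>j\<in>J. \<theta> j \<in> {-1/2..<1/2}" and M: "M > 2 * K"
    and between: "{a<..<b} \<subseteq> I" "I \<subseteq> {a..b}" and ab: "-1/2 \<le> a" "a \<le> b" "b \<le> 1/2"
  defines "A \<equiv> real (jackson_mass K)" and "N \<equiv> real (card J)"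
  shows "real M * A * \<bar>real (card {j\<in>J. \<theta> j \<in> I}) - N * (b - a)\<bar>
           \<le> A * (N + 2 * (real K + 1) * Q) * (16 * (2 / (real K + 1)) * real M + 8)
             + real M * (A * (2 * (real K + 1)) * Q) + A * N"
proof -
  define t where "t m = real m / real M - 1/2" for m
  define W where "W j m = jackson_kernel K (\<theta> j - t m)" for j m
  define G where "G = {m\<in>{..<M}. t m \<in> I}"
  define X where "X = (\<Sum>j\<in>J. \<Sum>m<M. if \<theta> j \<in> I then W j m else 0)"
  define Z where "Z = (\<Sum>j\<in>J. \<Sum>m<M. if t m \<in> I then W j m else 0)"
  have A: "0 < A" using jackson_mass_ge[of K] unfolding A_def
    by (smt (verit) of_nat_0_le_iff zero_less_power divide_pos_pos)
  have row: "(\<Sum>m<M. W j m) = real M * A" for j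
    using jackson_kernel_grid_sum[OF M, of "\<theta> j + 1/2"]
    by (simp add: W_def t_def A_def algebra_simps)
  have "X = (\<Sum>j\<in>J. if \<theta> j \<in> I then \<Sum>m<M. W j m else 0)"
    unfolding X_def by (intro sum.cong refl) auto
  also have "\<dots> = (\<Sum>j\<in>{j\<in>J. \<theta> j \<in> I}. \<Sum>m<M. W j m)"
    by (simp add: sum.inter_filter[OF J])
  finally have X: "X = real M * A * real (card {j\<in>J. \<theta> j \<in> I})"
    by (simp add: row)
  have "Z = (\<Sum>m<M. \<Sum>j\<in>J. if t m \<in> I then W j m else 0)"
    unfolding Z_def by (rule sum.swap)
  also have "\<dots> = (\<Sum>m<M. if t m \<in> I then \<Sum>j\<in>J. W j m else 0)"
    by (intro sum.cong refl) auto
  also have "\<dots> = (\<Sum>m\<in>G. \<Sum>j\<in>J. W j m)"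
    unfolding G_def by (rule sum.inter_filter[symmetric]) simp
  finally have "Z - real (card G) * (A * N) = (\<Sum>m\<in>G. (\<Sum>j\<in>J. W j m) - A * N)"
    by (simp add: sum_subtractf)
  then have "\<bar>Z - real (card G) * (A * N)\<bar> \<le> (\<Sum>m\<in>G. \<bar>(\<Sum>j\<in>J. W j m) - A * N\<bar>)"
    by (simp add: sum_abs)
  also have "\<dots> \<le> real (card G) * ((real K + 1)^4 * Q)"
    using sum_mono[of G _ "\<lambda>_. (real K + 1)^4 * Q"] jackson_kernel_sum_approx[OF Q weyl]
    by (simp add: W_def A_def N_def)
  also have "\<dots> \<le> real M * (A * (2 * (real K + 1)) * Q)"
    using card_mono[of "{..<M}" G] jackson_mass_bound[of K] Q
    by (intro mult_mono mult_right_mono) (auto simp: G_def A_def)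
  finally have Z: "\<bar>Z - real (card G) * (A * N)\<bar> \<le> real M * (A * (2 * (real K + 1)) * Q)" .
  have "\<bar>X - Z\<bar> \<le> A * (N + 2 * (real K + 1) * Q) * (16 * (2 / (real K + 1)) * real M + 8)"
    unfolding X_def Z_def W_def t_def A_def N_def sum_subtractf[symmetric]
    by (rule jackson_sampling_error_le[OF Q weyl \<theta>J _ between ab]) (use M in auto)
  moreover have "\<bar>A * N * (real (card G) - real M * (b - a))\<bar> \<le> A * N"
    using mult_left_mono[OF card_grid_in_interval[OF _ between ab], of M "A * N"] M A
    by (simp add: abs_mult G_def t_def N_def)
  moreover have "real M * A * (real (card {j\<in>J. \<theta> j \<in> I}) - N * (b - a))
      = (X - Z) + (Z - real (card G) * (A * N)) + A * N * (real (card G) - real M * (b - a))"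
    by (simp add: X algebra_simps)
  moreover have "real M * A * \<bar>real (card {j\<in>J. \<theta> j \<in> I}) - N * (b - a)\<bar>
      = \<bar>real M * A * (real (card {j\<in>J. \<theta> j \<in> I}) - N * (b - a))\<bar>"
    using A by (simp add: abs_mult)
  ultimately show ?thesis
    using Z abs_triangle_ineq[of "X - Z" "Z - real (card G) * (A * N)"]
      abs_triangle_ineq[of "(X - Z) + (Z - real (card G) * (A * N))" "A * N * (real (card G) - real M * (b - a))"]
    by linarith
qed

lemma discrepancy_le:
  fixes \<theta> :: "'a \<Rightarrow> real" and I :: "real set"
  assumes J: "finite J" and \<theta>J: "\<forall>j\<in>J. \<theta> j \<in> {-1/2..<1/2}" and Q: "0 \<le> Q"
    and weyl: "\<forall>k::int. 1 \<le> k \<and> k \<le> 2 * int K \<longrightarrow> cmod (\<Sum>j\<in>J. e2pi (of_int k * \<theta> j)) \<le> Q"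
    and I: "real_interval I" "I \<subseteq> {-1/2..<1/2}"
  shows "\<bar>real (card {j\<in>J. \<theta> j \<in> I}) - real (card J) * interval_length I\<bar>
           \<le> 32 * real (card J) / (real K + 1) + (2 * real K + 66) * Q + 1"
proof (cases "I = {}")
  case True
  then show ?thesis using Q by (simp add: interval_length_def)
next
  case False
  define a where "a = Inf I"
  define b where "b = Sup I"
  note bounds = Inf_Sup_in_half_open_unit[OF False I(2), folded a_def b_def]
  note between = real_interval_between_Inf_Sup[OF I(1) False bounds(1,2), folded a_def b_def]
  define N where "N = real (card J)"
  define A where "A = real (jackson_mass K)"
  define V where "V = N + 2 * (real K + 1) * Q"
  define M where "M = nat \<lceil>2 * N + 8 * V\<rceil> + 2 * K + 1"
  have M: "M > 2 * K" "real M \<ge> 2 * N + 8 * V" unfolding M_def by linarith+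
  have A: "0 < A" using jackson_mass_ge[of K] unfolding A_def
    by (smt (verit) of_nat_0_le_iff zero_less_power divide_pos_pos)
  have "real M * A * \<bar>real (card {j\<in>J. \<theta> j \<in> I}) - N * (b - a)\<bar>
          \<le> A * V * (16 * (2 / (real K + 1)) * real M + 8) + real M * (A * (2 * (real K + 1)) * Q) + A * N"
    unfolding A_def N_def V_def using bounds between
    by (intro discrepancy_grid_le J Q weyl \<theta>J M(1)) auto
  also have "\<dots> \<le> real M * A * (32 * V / (real K + 1) + 2 * (real K + 1) * Q + 1)"
    using mult_left_mono[of "N + 8 * V" "real M" A] M(2) A by (simp add: N_def algebra_simps)
  finally have "\<bar>real (card {j\<in>J. \<theta> j \<in> I}) - N * (b - a)\<bar> \<le> 32 * V / (real K + 1) + 2 * (real K + 1) * Q + 1"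
    using A M by (simp add: mult_le_cancel_left_pos)
  also have "32 * V / (real K + 1) + 2 * (real K + 1) * Q + 1 = 32 * N / (real K + 1) + (2 * real K + 66) * Q + 1"
    by (simp add: V_def field_simps)
  finally show ?thesis
    using False by (simp add: N_def interval_length_def a_def b_def)
qed

section \<open>Power sums from the factorisation of the L-function\<close>

definition neg_power_sums_fps :: "('a \<Rightarrow> complex) \<Rightarrow> 'a set \<Rightarrow> complex fps" where
  "neg_power_sums_fps c J = Abs_fps (\<lambda>n. if n = 0 then 0 else - (\<Sum>j\<in>J. c j ^ n))"

lemma neg_power_sums_fps_insert:
  "finite J \<Longrightarrow> i \<notin> J \<Longrightarrow> neg_power_sums_fps c (insert i J) = neg_power_sums_fps c J + neg_power_sums_fps c {i}"
  by (rule fps_ext) (simp add: neg_power_sums_fps_def)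

lemma one_minus_X_times_neg_power_sums_fps:
  "(1 - fps_const (c i) * fps_X) * neg_power_sums_fps c {i} = - (fps_const (c i) * fps_X)"
proof (rule fps_ext)
  fix n
  have "((1 - fps_const (c i) * fps_X) * neg_power_sums_fps c {i}) $ n
          = neg_power_sums_fps c {i} $ n - c i * (fps_X * neg_power_sums_fps c {i}) $ n"
    by (simp add: algebra_simps)
  also have "\<dots> = (- (fps_const (c i) * fps_X)) $ n"
    by (cases n; cases "n - 1") (simp_all add: neg_power_sums_fps_def)
  finally show "((1 - fps_const (c i) * fps_X) * neg_power_sums_fps c {i}) $ n
                  = (- (fps_const (c i) * fps_X)) $ n" .
qed

lemma fps_X_deriv_prod_one_minus_X:
  assumes "finite J"
  shows "fps_X * fps_deriv (\<Prod>j\<in>J. 1 - fps_const (c j) * fps_X)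
           = (\<Prod>j\<in>J. 1 - fps_const (c j) * fps_X) * neg_power_sums_fps c J"
  using assms
proof (induction J rule: finite_induct)
  case empty
  have "neg_power_sums_fps c {} = 0"
    by (rule fps_ext) (simp add: neg_power_sums_fps_def)
  then show ?case by simp
next
  case (insert i J)
  define P where "P = (\<Prod>j\<in>J. 1 - fps_const (c j) * fps_X)"
  define u where "u = 1 - fps_const (c i) * fps_X"
  have "fps_deriv u = - fps_const (c i)" by (simp add: u_def)
  have "fps_X * fps_deriv (u * P) = fps_X * (fps_deriv u * P + u * fps_deriv P)"
    by (simp add: fps_deriv_mult mult.commute)
  also have "\<dots> = - (fps_const (c i) * fps_X) * P + u * (fps_X * fps_deriv P)"
    using \<open>fps_deriv u = _\<close>
    by (simp add: algebra_simps del: fps_const_neg add: fps_const_neg[symmetric])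
  also have "\<dots> = (u * neg_power_sums_fps c {i}) * P + u * (P * neg_power_sums_fps c J)"
    using insert.IH one_minus_X_times_neg_power_sums_fps[of c i]
    by (simp only: P_def[symmetric] u_def[symmetric])
  also have "\<dots> = (u * P) * neg_power_sums_fps c (insert i J)"
    by (simp only: neg_power_sums_fps_insert[OF insert.hyps] algebra_simps)
  finally show ?case
    using insert by (simp add: P_def u_def)
qed

lemma power_sums_of_fps_exp_eq_prod:
  fixes c :: "'a \<Rightarrow> complex" and S :: "nat \<Rightarrow> complex"
  assumes J: "finite J"
    and L: "fps_exp 1 oo Abs_fps (\<lambda>n. if n = 0 then 0 else S n / of_nat n) = (\<Prod>j\<in>J. 1 - fps_const (c j) * fps_X)"
    and n: "n \<ge> 1"
  shows "S n = - (\<Sum>j\<in>J. c j ^ n)"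
proof -
  define G where "G = Abs_fps (\<lambda>n. if n = 0 then 0 else S n / of_nat n)"
  define P where "P = (\<Prod>j\<in>J. 1 - fps_const (c j) * fps_X)"
  have "fps_deriv P = (fps_deriv (fps_exp 1) oo G) * fps_deriv G"
    unfolding P_def L[folded G_def, symmetric] by (rule fps_compose_deriv) (simp add: G_def)
  then have "fps_deriv P = P * fps_deriv G"
    using L by (simp add: G_def P_def)
  then have "P * (fps_X * fps_deriv G) = P * neg_power_sums_fps c J"
    using fps_X_deriv_prod_one_minus_X[OF J, of c] by (simp add: P_def algebra_simps)
  moreover have "P \<noteq> 0"
  proof -
    have "(1 - fps_const (c j) * fps_X) $ 0 = 1" for j
      by simp
    then have "1 - fps_const (c j) * fps_X \<noteq> 0" for j
      by (metis fps_zero_nth zero_neq_one)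
    then show ?thesis using J by (simp add: P_def)
  qed
  ultimately have "fps_X * fps_deriv G = neg_power_sums_fps c J" by simp
  then have "(fps_X * fps_deriv G) $ n = neg_power_sums_fps c J $ n" by simp
  moreover obtain k where k: "n = Suc k" using n by (cases n) auto
  ultimately show ?thesis
    by (simp add: G_def neg_power_sums_fps_def del: of_nat_Suc)
qed

section \<open>Exponential sums over finite fields\<close>

lemma poly_power_char_power:
  fixes f :: "'k::field poly"
  assumes "prime CHAR('k)" and "m = CHAR('k) ^ k"
  shows "poly f x ^ m = (\<Sum>i\<le>degree f. coeff f i ^ m * (x ^ m) ^ i)"
proof -
  have "poly f x ^ m = (\<Sum>i\<le>degree f. (coeff f i * x ^ i) ^ m)"
    unfolding poly_altdef by (rule freshmans_dream_sum'[OF assms])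
  then show ?thesis
    by (simp add: power_mult_distrib power_mult[symmetric] mult.commute)
qed

lemma power_power_eq_self:
  fixes c :: "'a::monoid_mult"
  assumes "c ^ q = c"
  shows "c ^ (q ^ n) = c"
proof (induction n)
  case (Suc n)
  then show ?case using assms by (simp add: power_mult mult.commute)
qed simp

lemma poly_mem_finite_subfield:
  fixes f :: "'k::field poly"
  assumes "CHAR('k) = p" "prime p"
    and "\<forall>i. coeff f i \<in> finite_subfield (p ^ e)"
    and "x \<in> finite_subfield ((p ^ e) ^ n)"
  shows "poly f x \<in> finite_subfield ((p ^ e) ^ n)"
proof -
  have "poly f x ^ ((p ^ e) ^ n) = (\<Sum>i\<le>degree f. coeff f i ^ ((p ^ e) ^ n) * (x ^ ((p ^ e) ^ n)) ^ i)"
    using assms by (intro poly_power_char_power[where k = "e * n"]) (auto simp: power_mult)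
  also have "\<dots> = poly f x"
  proof -
    have "coeff f i ^ ((p ^ e) ^ n) = coeff f i" for i
      using assms(3) power_power_eq_self[of "coeff f i" "p ^ e" n] by (simp add: finite_subfield_def)
    then show ?thesis using assms(4) by (simp add: finite_subfield_def poly_altdef)
  qed
  finally show ?thesis by (simp add: finite_subfield_def)
qed

lemma abs_trace_mem_prime_field:
  fixes y :: "'k::field"
  assumes "CHAR('k) = p" "prime p"
    and y: "y \<in> finite_subfield ((p ^ e) ^ n)"
  shows "abs_trace p e n y \<in> finite_subfield p"
proof -
  define N where "N = n * e"
  have yN: "y ^ (p ^ N) = y"
    using y by (simp add: finite_subfield_def N_def power_mult mult.commute)
  have "abs_trace p e n y ^ p = (\<Sum>i<N. y ^ (p ^ Suc i))"
    unfolding abs_trace_def N_def using assms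
    by (subst freshmans_dream_sum) (auto simp: power_mult[symmetric] mult.commute)
  also have "\<dots> = (\<Sum>i<N. y ^ (p ^ i))"
    using sum.lessThan_Suc_shift[of "\<lambda>i. y ^ (p ^ i)" N] yN by simp
  finally show ?thesis by (simp add: finite_subfield_def abs_trace_def N_def)
qed

lemma norm_nontriv_add_char_le_1:
  fixes \<psi> :: "'k::field \<Rightarrow> complex"
  assumes char: "CHAR('k) = p" "prime p" and \<psi>: "nontriv_add_char p \<psi>"
    and x: "x \<in> finite_subfield p"
  shows "cmod (\<psi> x) \<le> 1"
proof -
  have p: "p > 0" using char prime_gt_0_nat by blast
  have add: "\<psi> (a + b) = \<psi> a * \<psi> b" if "a \<in> finite_subfield p" "b \<in> finite_subfield p" for a b
    using \<psi> that unfolding nontriv_add_char_def by blast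
  have zero: "(0::'k) \<in> finite_subfield p" using p by (simp add: finite_subfield_def)
  have closed: "of_nat k * x \<in> finite_subfield p" for k
  proof (induction k)
    case (Suc k)
    have "(of_nat k * x + x) ^ p = (of_nat k * x) ^ p + x ^ p"
      using char by (intro freshmans_dream) auto
    then show ?case using Suc x by (simp add: finite_subfield_def algebra_simps)
  qed (use zero in simp)
  have multiple: "\<psi> (of_nat k * x) = \<psi> 0 * \<psi> x ^ k" for k
  proof (induction k)
    case (Suc k)
    have "\<psi> (of_nat (Suc k) * x) = \<psi> (of_nat k * x) * \<psi> x"
      using add[OF closed x] by (simp add: algebra_simps)
    then show ?case using Suc by simp
  qed simp
  have "\<psi> 0 = \<psi> 0 * \<psi> 0" using add[OF zero zero] by simp
  then consider "\<psi> 0 = 0" | "\<psi> 0 = 1" by (metis mult_cancel_left1 mult.commute)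
  then show ?thesis
  proof cases
    case 1
    then show ?thesis using add[OF x zero] by simp
  next
    case 2
    have px: "of_nat p * x = (0::'k)" using char by (metis of_nat_CHAR mult_zero_left)
    have "\<psi> 0 = \<psi> 0 * \<psi> x ^ p" using multiple[of p] unfolding px .
    then have "\<psi> x ^ p = 1" using 2 by simp
    then have "cmod (\<psi> x) ^ p = 1" by (metis norm_one norm_power)
    then show ?thesis using p by (metis one_less_power not_le order.refl)
  qed
qed

lemma card_finite_subfield_le:
  assumes "m \<ge> 2"
  shows "card (finite_subfield m :: 'k::field set) \<le> m"
proof -
  define P :: "'k poly" where "P = monom 1 m + - [:0, 1:]"
  have "degree P = m"
    unfolding P_def using assms by (subst degree_add_eq_left) (auto simp: degree_monom_eq)
  moreover have "finite_subfield m = {x. poly P x = 0}"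
    by (simp add: P_def finite_subfield_def poly_monom)
  moreover have "P \<noteq> 0" using \<open>degree P = m\<close> assms by auto
  ultimately show ?thesis using card_poly_roots_bound[of P] by simp
qed

lemma norm_exp_sum_le:
  fixes f :: "'k::field poly" and \<psi> :: "'k \<Rightarrow> complex"
  assumes char: "CHAR('k) = p" "prime p" and e: "e \<ge> 1" and n: "n \<ge> 1"
    and coeffs: "\<forall>i. coeff f i \<in> finite_subfield (p ^ e)"
    and \<psi>: "nontriv_add_char p \<psi>"
  shows "cmod (exp_sum p e f \<psi> n) \<le> real ((p ^ e) ^ n)"
proof -
  define F where "F = (finite_subfield ((p ^ e) ^ n) :: 'k set)"
  have "2 \<le> p" using char prime_ge_2_nat by blast
  moreover have "p \<le> p ^ e" using e \<open>2 \<le> p\<close> by (simp add: self_le_power)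
  moreover have "p ^ e \<le> (p ^ e) ^ n" using n \<open>2 \<le> p\<close> by (simp add: self_le_power)
  ultimately have "2 \<le> (p ^ e) ^ n" by linarith
  have "cmod (exp_sum p e f \<psi> n) \<le> (\<Sum>x\<in>F. cmod (\<psi> (abs_trace p e n (poly f x))))"
    unfolding exp_sum_def F_def by (rule norm_sum)
  also have "\<dots> \<le> (\<Sum>x\<in>F. 1)"
    unfolding F_def using char coeffs
    by (intro sum_mono norm_nontriv_add_char_le_1[OF char \<psi>] abs_trace_mem_prime_field
        poly_mem_finite_subfield) auto
  also have "\<dots> = real (card F)" by simp
  also have "\<dots> \<le> real ((p ^ e) ^ n)"
    using card_finite_subfield_le[OF \<open>2 \<le> (p ^ e) ^ n\<close>] unfolding F_def of_nat_le_iff .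
  finally show ?thesis .
qed

lemma power_scaled_exp_2pi:
  "(complex_of_real s * exp (2 * pi * \<i> * complex_of_real t)) ^ n = complex_of_real (s ^ n) * e2pi (real n * t)"
proof -
  have "exp (2 * pi * \<i> * complex_of_real t) ^ n = exp (of_nat n * (2 * pi * \<i> * complex_of_real t))"
    by (rule exp_of_nat_mult[symmetric])
  also have "\<dots> = e2pi (real n * t)"
    unfolding e2pi_def cis_conv_exp by (simp add: algebra_simps)
  finally show ?thesis by (simp add: power_mult_distrib)
qed

lemma weyl_sum_le_of_L_fps_eq_prod:
  fixes f :: "'k::field poly" and \<psi> :: "'k \<Rightarrow> complex" and \<theta> :: "nat \<Rightarrow> real"
  assumes char: "CHAR('k) = p" "prime p" and e: "e \<ge> 1"
    and coeffs: "\<forall>i. coeff f i \<in> finite_subfield (p ^ e)"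
    and \<psi>: "nontriv_add_char p \<psi>"
    and L: "L_fps p e f \<psi> = (\<Prod>j\<in>{1..degree f - 1}.
        1 - fps_const (complex_of_real (sqrt (real (p ^ e))) * exp (2 * pi * \<i> * complex_of_real (\<theta> j))) * fps_X)"
    and n: "n \<ge> 1"
  shows "cmod (\<Sum>j\<in>{1..degree f - 1}. e2pi (real n * \<theta> j)) \<le> sqrt (real (p ^ e)) ^ n"
proof -
  define s where "s = sqrt (real (p ^ e))"
  have "1 \<le> real p" using prime_ge_1_nat[OF char(2)] by simp
  then have s: "s \<ge> 1" by (simp add: s_def)
  have "exp_sum p e f \<psi> n
          = - (\<Sum>j\<in>{1..degree f - 1}. (complex_of_real s * exp (2 * pi * \<i> * complex_of_real (\<theta> j))) ^ n)"
    using L n unfolding L_fps_def s_def by (intro power_sums_of_fps_exp_eq_prod) auto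
  also have "\<dots> = - (complex_of_real (s ^ n) * (\<Sum>j\<in>{1..degree f - 1}. e2pi (real n * \<theta> j)))"
    by (simp only: power_scaled_exp_2pi sum_distrib_left)
  finally have "s ^ n * cmod (\<Sum>j\<in>{1..degree f - 1}. e2pi (real n * \<theta> j)) = cmod (exp_sum p e f \<psi> n)"
    using s by (simp add: norm_mult norm_power)
  also have "\<dots> \<le> s ^ n * s ^ n"
    using norm_exp_sum_le[OF char e n coeffs \<psi>] s
    by (simp add: s_def power_mult_distrib[symmetric] flip: power_mult)
  finally have "cmod (\<Sum>j\<in>{1..degree f - 1}. e2pi (real n * \<theta> j)) \<le> s ^ n"
    by (rule mult_left_le_imp_le) (use s in simp)
  then show ?thesis by (simp only: s_def)
qed

lemma weyl_sums_le_of_L_fps_eq_prod: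
  fixes f :: "'k::field poly" and \<psi> :: "'k \<Rightarrow> complex" and \<theta> :: "nat \<Rightarrow> real"
  assumes "CHAR('k) = p" "prime p" "e \<ge> 1"
    and "\<forall>i. coeff f i \<in> finite_subfield (p ^ e)" "nontriv_add_char p \<psi>"
    and "L_fps p e f \<psi> = (\<Prod>j\<in>{1..degree f - 1}.
        1 - fps_const (complex_of_real (sqrt (real (p ^ e))) * exp (2 * pi * \<i> * complex_of_real (\<theta> j))) * fps_X)"
  shows "\<forall>k::int. 1 \<le> k \<and> k \<le> 2 * int K \<longrightarrow>
           cmod (\<Sum>j\<in>{1..degree f - 1}. e2pi (of_int k * \<theta> j)) \<le> real (p ^ e) ^ K"
proof (intro allI impI)
  fix k :: int
  assume k: "1 \<le> k \<and> k \<le> 2 * int K"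
  define s where "s = sqrt (real (p ^ e))"
  have "1 \<le> real p" using prime_ge_1_nat[OF assms(2)] by simp
  then have s: "1 \<le> s" by (simp add: s_def)
  have "cmod (\<Sum>j\<in>{1..degree f - 1}. e2pi (real (nat k) * \<theta> j)) \<le> s ^ nat k"
    unfolding s_def using assms k by (intro weyl_sum_le_of_L_fps_eq_prod) auto
  also have "\<dots> \<le> s ^ (2 * K)" using s k by (intro power_increasing) auto
  also have "\<dots> = real (p ^ e) ^ K" by (simp add: s_def power_mult)
  finally show "cmod (\<Sum>j\<in>{1..degree f - 1}. e2pi (of_int k * \<theta> j)) \<le> real (p ^ e) ^ K"
    using k by simp
qed

section \<open>Choosing the frequency cut-off\<close>

lemma ln_sqrt_product_le:
  fixes d :: real
  assumes d: "d \<ge> 2"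
  shows "((ln d + 66) * sqrt d + 1) * ln d \<le> 284 * d"
proof -
  define s where "s = sqrt (sqrt d)"
  have s1: "s \<ge> 1" and s2: "s^2 = sqrt d" unfolding s_def using d by simp_all
  have "s^4 = (s^2)^2" by (simp flip: power_mult)
  also have "\<dots> = d" unfolding s2 using d by simp
  finally have s4: "s^4 = d" .
  note s = s1 s2 s4
  have "ln d = ln (s^4)" using s4 by simp
  also have "\<dots> = 4 * ln s" using s1 by (simp add: ln_realpow)
  also have "\<dots> \<le> 4 * s" using ln_le_minus_one[of s] s by simp
  finally have ld: "ln d \<le> 4 * s" .
  have ld0: "0 \<le> ln d" using d by simp
  have "((ln d + 66) * sqrt d + 1) * ln d \<le> ((4 * s + 66) * s^2 + 1) * (4 * s)"
    using ld ld0 d s by (intro mult_mono add_mono) auto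
  also have "\<dots> = 16 * s^4 + 264 * s^3 + 4 * s"
    by (simp add: algebra_simps eval_nat_numeral)
  also have "\<dots> \<le> 16 * s^4 + 264 * s^4 + 4 * s^4"
    using s power_increasing[of 3 4 s] power_increasing[of 1 4 s] by simp
  also have "\<dots> = 284 * d" using s by simp
  finally show ?thesis .
qed

lemma power_floor_ln_ratio_le_sqrt:
  fixes q d :: real
  assumes "q > 1" "d \<ge> 1"
  shows "q ^ nat \<lfloor>ln d / (2 * ln q)\<rfloor> \<le> sqrt d"
proof -
  define K where "K = nat \<lfloor>ln d / (2 * ln q)\<rfloor>"
  have "real K \<le> ln d / (2 * ln q)"
    using assms unfolding K_def by (simp add: of_nat_nat)
  then have "real K * ln q \<le> ln d / 2"
    using assms by (simp add: field_simps)
  moreover have "q ^ K = exp (real K * ln q)"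
    using assms by (simp add: exp_of_nat_mult)
  ultimately have "q ^ K \<le> exp (ln d / 2)" by simp
  also have "exp (ln d / 2) = sqrt d"
    using assms by (simp add: powr_half_sqrt[symmetric] powr_def)
  finally show ?thesis by (simp add: K_def)
qed

lemma le_d_over_ln_d_of_frequency_bounds:
  fixes q X :: real and d :: nat
  assumes q: "q \<ge> 3" and d: "d \<ge> 2" and trivial: "X \<le> real d"
    and frequency: "\<And>K::nat. K \<ge> 1 \<Longrightarrow> X \<le> 32 * real d / (real K + 1) + (2 * real K + 66) * q ^ K + 1"
  shows "X \<le> (66 * ln q + 284) * (real d / ln (real d))"
proof -
  define ld where "ld = ln (real d)"
  define lq where "lq = ln q"
  have "exp 1 \<le> q" using exp_le q by linarith
  then have "ln (exp 1) \<le> ln q" using q by (subst ln_le_cancel_iff) auto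
  then have lq: "lq \<ge> 1" by (simp add: lq_def)
  have ld: "ld > 0" unfolding ld_def using d by simp
  have dld: "real d / ld > 0" using ld d by simp
  define K where "K = nat \<lfloor>ld / (2 * lq)\<rfloor>"
  show ?thesis
  proof (cases "K = 0")
    case True
    then have "ld < 2 * lq" using lq unfolding K_def by (simp add: field_simps)
    then have "ld \<le> 66 * lq + 284" using lq by simp
    then have "(real d / ld) * ld \<le> (real d / ld) * (66 * lq + 284)"
      using dld by (intro mult_left_mono) auto
    then show ?thesis using trivial ld by (simp add: ld_def lq_def mult.commute)
  next
    case False
    have K_le: "real K \<le> ld / (2 * lq)" and K_gt: "ld / (2 * lq) < real K + 1"
      using False ld lq unfolding K_def by linarith+
    have "32 * real d / (real K + 1) \<le> 32 * real d / (ld / (2 * lq))"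
      using K_gt ld lq d by (intro divide_left_mono) auto
    also have "\<dots> = 64 * lq * (real d / ld)" using ld lq by (simp add: field_simps)
    finally have first: "32 * real d / (real K + 1) \<le> 64 * lq * (real d / ld)" .
    have "2 * real K \<le> ld / lq" using K_le lq by (simp add: field_simps)
    also have "\<dots> \<le> ld" using ld lq by (simp add: divide_le_eq)
    finally have "2 * real K \<le> ld" .
    moreover have "q ^ K \<le> sqrt (real d)"
      unfolding K_def ld_def lq_def using q d by (intro power_floor_ln_ratio_le_sqrt) auto
    ultimately have "(2 * real K + 66) * q ^ K + 1 \<le> (ld + 66) * sqrt (real d) + 1"
      using q by (intro add_mono mult_mono) auto
    also have "\<dots> \<le> 284 * (real d / ld)"
      using ln_sqrt_product_le[of "real d"] d ld by (simp add: ld_def field_simps)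
    finally have "X \<le> 64 * lq * (real d / ld) + 284 * (real d / ld)"
      using frequency[of K] False first by linarith
    also have "\<dots> \<le> (66 * lq + 284) * (real d / ld)"
    proof -
      have lin: "64 * lq * Y + 284 * Y \<le> (66 * lq + 284) * Y" if "0 \<le> lq * Y" for Y
        using that by (simp add: ring_distribs mult.commute)
      show ?thesis using lq dld by (intro lin mult_nonneg_nonneg) auto
    qed
    finally show ?thesis by (simp add: ld_def lq_def)
  qed
qed

lemma discrepancy_trivial_le:
  assumes "finite J" "I \<subseteq> {-1/2..<1/2}"
  shows "\<bar>real (card {j\<in>J. \<theta> j \<in> I}) - real (card J) * interval_length I\<bar> \<le> real (card J)"
proof -
  have "card {j\<in>J. \<theta> j \<in> I} \<le> card J" using assms(1) by (intro card_mono) auto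
  moreover have "0 \<le> real (card J) * interval_length I" "real (card J) * interval_length I \<le> real (card J)"
    using interval_length_bounds[OF assms(2)] by (simp_all add: mult_left_le)
  ultimately show ?thesis by linarith
qed

lemma discrepancy_le_d_over_ln_d:
  fixes \<theta> :: "nat \<Rightarrow> real" and q :: real
  assumes q: "q \<ge> 3" and "d \<noteq> 0" and \<theta>: "\<forall>j\<in>{1..d - 1}. \<theta> j \<in> {-1/2..<1/2}"
    and weyl: "\<And>K. \<forall>k::int. 1 \<le> k \<and> k \<le> 2 * int K \<longrightarrow>
                  cmod (\<Sum>j\<in>{1..d - 1}. e2pi (of_int k * \<theta> j)) \<le> q ^ K"
    and I: "real_interval I" "I \<subseteq> {-1/2..<1/2}"
  shows "\<bar>real (card {j\<in>{1..d - 1}. \<theta> j \<in> I}) - (real d - 1) * interval_length I\<bar>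
           \<le> (66 * ln q + 284) * (real d / ln (real d))"
    (is "?X \<le> _")
proof (cases "d = 1")
  case False
  with \<open>d \<noteq> 0\<close> have "2 \<le> d" by simp
  have card_J: "real (card {1..d - 1}) = real d - 1" using \<open>d \<noteq> 0\<close> by (simp add: of_nat_diff)
  show ?thesis
  proof (rule le_d_over_ln_d_of_frequency_bounds[OF q \<open>2 \<le> d\<close>])
    show "?X \<le> real d"
      using discrepancy_trivial_le[OF _ I(2), of "{1..d - 1}" \<theta>] card_J by simp
    fix K :: nat
    have "?X \<le> 32 * (real d - 1) / (real K + 1) + (2 * real K + 66) * q ^ K + 1"
      using discrepancy_le[OF _ \<theta> _ weyl I] card_J q by simp
    also have "\<dots> \<le> 32 * real d / (real K + 1) + (2 * real K + 66) * q ^ K + 1"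
      by (simp add: divide_right_mono)
    finally show "?X \<le> 32 * real d / (real K + 1) + (2 * real K + 66) * q ^ K + 1" .
  qed
qed simp

theorem theorem4p2:
  fixes p e :: nat
  assumes "prime p" and "odd p" and "e \<ge> 1"
    and "CHAR('k::field) = p" and "alg_closed_field TYPE('k)"
  shows "\<exists>C::real. \<forall>(f :: 'k poly) (\<psi> :: 'k \<Rightarrow> complex) (\<theta> :: nat \<Rightarrow> real) (I :: real set).
     (\<forall>i. coeff f i \<in> finite_subfield (p ^ e)) \<longrightarrow>
     \<not> p dvd degree f \<longrightarrow>
     nontriv_add_char p \<psi> \<longrightarrow>
     (\<forall>j\<in>{1..degree f - 1}. \<theta> j \<in> {-1/2..<1/2}) \<longrightarrow>
     L_fps p e f \<psi> = (\<Prod>j\<in>{1..degree f - 1}.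
        1 - fps_const (complex_of_real (sqrt (real (p ^ e))) * exp (2 * pi * \<i> * complex_of_real (\<theta> j))) * fps_X) \<longrightarrow>
     real_interval I \<longrightarrow> I \<subseteq> {-1/2..<1/2} \<longrightarrow>
     \<bar>real (card {j\<in>{1..degree f - 1}. \<theta> j \<in> I}) - (real (degree f) - 1) * interval_length I\<bar>
       \<le> C * (real (degree f) / ln (real (degree f)))"
proof -
  have "p \<noteq> 2" "2 \<le> p" using assms(1,2) prime_ge_2_nat by auto
  then have "3 \<le> p" "p \<le> p ^ e" using assms(3) by (auto simp: self_le_power)
  then have q: "3 \<le> real (p ^ e)" by linarith
  show ?thesis
  proof (intro exI allI impI)
    fix f :: "'k poly" and \<psi> :: "'k \<Rightarrow> complex" and \<theta> :: "nat \<Rightarrow> real" and I :: "real set"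
    assume "\<forall>i. coeff f i \<in> finite_subfield (p ^ e)" "\<not> p dvd degree f" "nontriv_add_char p \<psi>"
      "\<forall>j\<in>{1..degree f - 1}. \<theta> j \<in> {-1/2..<1/2}"
      "L_fps p e f \<psi> = (\<Prod>j\<in>{1..degree f - 1}.
        1 - fps_const (complex_of_real (sqrt (real (p ^ e))) * exp (2 * pi * \<i> * complex_of_real (\<theta> j))) * fps_X)"
      "real_interval I" "I \<subseteq> {-1/2..<1/2}"
    moreover from this(2) have "degree f \<noteq> 0" by (metis dvd_0_right)
    ultimately show "\<bar>real (card {j\<in>{1..degree f - 1}. \<theta> j \<in> I}) - (real (degree f) - 1) * interval_length I\<bar>
       \<le> (66 * ln (real (p ^ e)) + 284) * (real (degree f) / ln (real (degree f)))"
      using assms(1,3,4) by (intro discrepancy_le_d_over_ln_d q weyl_sums_le_of_L_fps_eq_prod) auto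
  qed
qed

end
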